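(* Let $0\le\alpha<\alpha_{space}:=\min(v_0/4,\gamma/(2V^0))$, let $u_0\in C_\alpha$ and let $(s,u)$ be the solution of the free-interface problem with initial data $u_0$. Then for all $t>0$, $$|T_1(t)u_0|_\alpha\le V^0/\sqrt\gamma .$$
   Context: Fix $\gamma>0$, $0<v_0\le V^0$. The kinetics $g:[0,\infty)\to\mathbb{R}$ is monotonically decreasing, differentiable, $|g'|\le C$, $-V^0\le g\le -v_0$. Free-interface problem: find $s(t)$, $s(0)=0$, and $u(x,t)$ with $u_t=u_{xx}-\gamma u$ for $x\ne s(t)$, $t>0$; $u(x,0)=u_0(x)$; $g(u(s(t),t))=v(t)$; $u_x^+(s(t),t)-u_x^-(s(t),t)=v(t)$, with $v=s'$, $u_x^\pm$ one-sided derivatives, $u\to0$ at $\pm\infty$; the classical solution exists and is unique, and $-V^0\le v(t)\le -v_0$. With $G(x,t,\xi,\tau)=[4\pi(t-\tau)]^{-1/2}\exp\{-(x-\xi)^2/(4(t-\tau))\}$, define $(T_1(t)u_0)(x)=-\int_0^t e^{-\gamma(t-\tau)}G(x,t,s(\tau),\tau)v(\tau)d\tau$ (the free-interface contribution to $u$). Weighted norms: $|f|_\alpha=\sup_x e^{\alpha|x|}|f(x)|$, $C_\alpha=\{f\in C(\mathbb{R}):|f|_\alpha<\infty\}$; for a function $f(\cdot,t)$ associated with the solution at time $t$, $|f(\cdot,t)|_\alpha:=\sup_x e^{\alpha|x-s(t)|}|f(x,t)|$. *)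

theory Defs
  imports "HOL-Analysis.Analysis"
begin

definition heat_kernel :: "real \<Rightarrow> real \<Rightarrow> real \<Rightarrow> real \<Rightarrow> real" where
  "heat_kernel x t \<xi> \<tau> = exp (- ((x - \<xi>)^2) / (4 * (t - \<tau>))) / sqrt (4 * pi * (t - \<tau>))"

definition C_alpha :: "real \<Rightarrow> (real \<Rightarrow> real) set" where
  "C_alpha \<alpha> = {f. continuous_on UNIV f \<and> bdd_above (range (\<lambda>x. exp (\<alpha> * \<bar>x\<bar>) * \<bar>f x\<bar>))}"

definition admissible_kinetics :: "real \<Rightarrow> real \<Rightarrow> real \<Rightarrow> (real \<Rightarrow> real) \<Rightarrow> bool" where
  "admissible_kinetics v0 V0 C g \<longleftrightarrow>
     antimono_on {0..} g \<and>
     (\<exists>g'. \<forall>y\<ge>0. (g has_real_derivative g' y) (at y within {0..}) \<and> \<bar>g' y\<bar> \<le> C) \<and>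
     (\<forall>y\<ge>0. - V0 \<le> g y \<and> g y \<le> - v0)"

definition free_interface_solution ::
  "real \<Rightarrow> (real \<Rightarrow> real) \<Rightarrow> (real \<Rightarrow> real) \<Rightarrow> (real \<Rightarrow> real) \<Rightarrow> (real \<Rightarrow> real)
     \<Rightarrow> (real \<Rightarrow> real \<Rightarrow> real) \<Rightarrow> bool" where
  "free_interface_solution \<gamma> g u0 s v u \<longleftrightarrow>
     s 0 = 0 \<and> continuous_on {0..} s \<and>
     (\<forall>t>0. (s has_real_derivative v t) (at t)) \<and>
     continuous_on (UNIV \<times> {0..}) (\<lambda>(x, t). u x t) \<and>
     (\<forall>x. u x 0 = u0 x) \<and>
     (\<forall>t>0. \<forall>x. x \<noteq> s t \<longrightarrow>
        (\<exists>ut ux uxx.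
           ((\<lambda>\<tau>. u x \<tau>) has_real_derivative ut) (at t) \<and>
           (\<forall>\<^sub>F y in at x. ((\<lambda>z. u z t) has_real_derivative ux y) (at y)) \<and>
           (ux has_real_derivative uxx) (at x) \<and>
           ut = uxx - \<gamma> * u x t)) \<and>
     (\<forall>t>0. u (s t) t \<ge> 0 \<and> g (u (s t) t) = v t) \<and>
     (\<forall>t>0. \<exists>uxp uxm.
        ((\<lambda>z. u z t) has_real_derivative uxp) (at_right (s t)) \<and>
        ((\<lambda>z. u z t) has_real_derivative uxm) (at_left (s t)) \<and>
        uxp - uxm = v t) \<and>
     (\<forall>t>0. ((\<lambda>x. u x t) \<longlongrightarrow> 0) at_top \<and> ((\<lambda>x. u x t) \<longlongrightarrow> 0) at_bot)"

text \<open>Free-interface contribution (T_1(t) u0)(x).\<close>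
definition T1 :: "real \<Rightarrow> (real \<Rightarrow> real) \<Rightarrow> (real \<Rightarrow> real) \<Rightarrow> real \<Rightarrow> real \<Rightarrow> real" where
  "T1 \<gamma> s v t x = - integral {0..t} (\<lambda>\<tau>. exp (- \<gamma> * (t - \<tau>)) * heat_kernel x t (s \<tau>) \<tau> * v \<tau>)"

end

theory Submission
  imports Defs
begin

text \<open>The interface moves with speed at most \<open>V0\<close>, so
  \<open>|x - s t| \<le> |x - s \<tau>| + V0 (t - \<tau>)\<close>. Completing the square, the Gaussian factor of
  \<open>G(x,t,s \<tau>,\<tau>)\<close> absorbs the weight \<open>exp (\<alpha> |x - s t|)\<close> at the cost of
  \<open>exp ((\<alpha>\<^sup>2 + \<alpha> V0)(t - \<tau>))\<close>, and the restriction on \<open>\<alpha>\<close> leaves the net damping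
  \<open>exp (-\<gamma> (t - \<tau>) / 4)\<close>. What remains is bounded by
  \<open>V0 \<integral>\<^sub>0\<^sup>\<infinity> exp (-\<gamma> \<sigma> / 4) / sqrt (4 \<pi> \<sigma>) d\<sigma> = V0 \<Gamma>(1/2) / sqrt (\<pi> \<gamma>) = V0 / sqrt \<gamma>\<close>.\<close>

lemma Gamma_half_integral_bound:
  fixes b :: real
  shows "(\<lambda>u. u powr (-1/2) / exp u) integrable_on {0..b}"
    and "integral {0..b} (\<lambda>u. u powr (-1/2) / exp u) \<le> sqrt pi"
proof -
  let ?F = "\<lambda>u::real. u powr (-1/2) / exp u"
  have Gamma: "(?F has_integral sqrt pi) {0..}"
    using Gamma_integral_real[of "1/2"] by (simp add: Gamma_one_half_real)
  show int: "?F integrable_on {0..b}"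
    by (rule integrable_on_subinterval[of _ "{0..}"]) (use Gamma in auto)
  have "integral {0..b} ?F \<le> integral {0..} ?F"
    by (rule integral_subset_le) (use Gamma int in auto)
  then show "integral {0..b} ?F \<le> sqrt pi"
    using Gamma by (simp add: integral_unique)
qed

lemma damped_heat_kernel_integral_le:
  fixes c t :: real
  assumes "c > 0"
  defines "k \<equiv> \<lambda>\<tau>. exp (- c * (t - \<tau>)) / sqrt (4 * pi * (t - \<tau>))"
  shows "k integrable_on {0..t}" and "integral {0..t} k \<le> 1 / (2 * sqrt c)"
proof -
  let ?F = "\<lambda>u::real. u powr (-1/2) / exp u"
  define I where "I = integral {0..c * t} ?F"
  have "(?F has_integral I) (cbox 0 (c * t))"
    using Gamma_half_integral_bound(1) unfolding I_def cbox_interval by blast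
  \<comment> \<open>substitute \<open>u = c (t - \<tau>)\<close>\<close>
  from has_integral_affinity[OF this, of "- c" "c * t"] assms
  have "((\<lambda>\<tau>. ?F (c * (t - \<tau>))) has_integral I / c) ((\<lambda>x. (- 1 / c) * x + t) ` {0..c * t})"
    by (simp add: algebra_simps)
  moreover have "(\<lambda>x. (- 1 / c) * x + t) ` {0..c * t} = {0..t}"
    using assms by (simp only: image_affinity_atLeastAtMost) (auto simp: field_simps)
  ultimately have "((\<lambda>\<tau>. ?F (c * (t - \<tau>))) has_integral I / c) {0..t}"
    by simp
  then have scaled: "((\<lambda>\<tau>. sqrt c / sqrt (4 * pi) * ?F (c * (t - \<tau>))) has_integral
      sqrt c / sqrt (4 * pi) * (I / c)) {0..t}"
    by (rule has_integral_mult_right)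
  have kernel_eq: "sqrt c / sqrt (4 * pi) * ?F (c * (t - \<tau>)) = k \<tau>" if "\<tau> \<in> {0..t}" for \<tau>
  proof (cases "\<tau> = t")
    case False
    with that have \<sigma>: "t - \<tau> > 0" by simp
    have powr: "(c * (t - \<tau>)) powr (-1/2) = 1 / (sqrt c * sqrt (t - \<tau>))"
      using assms \<sigma> by (simp add: powr_minus_divide powr_half_sqrt real_sqrt_mult)
    have sqrt: "sqrt (4 * pi * (t - \<tau>)) = sqrt (4 * pi) * sqrt (t - \<tau>)"
      by (simp add: real_sqrt_mult)
    have exp: "exp (- c * (t - \<tau>)) = 1 / exp (c * (t - \<tau>))"
      by (simp add: exp_minus inverse_eq_divide)
    show ?thesis
      unfolding k_def powr sqrt exp using assms by simp
  qed (simp add: k_def)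
  have k: "(k has_integral sqrt c / sqrt (4 * pi) * (I / c)) {0..t}"
    by (rule has_integral_eq[OF kernel_eq scaled])
  then show "k integrable_on {0..t}" by blast
  have "sqrt c / sqrt (4 * pi) * (I / c) \<le> sqrt c / sqrt (4 * pi) * (sqrt pi / c)"
    using Gamma_half_integral_bound(2)[of "c * t"] assms
    unfolding I_def by (intro mult_left_mono divide_right_mono) auto
  also have "\<dots> = 1 / (2 * sqrt c)"
    using assms by (simp add: real_sqrt_mult field_simps)
  finally show "integral {0..t} k \<le> 1 / (2 * sqrt c)"
    using k by (simp add: integral_unique)
qed

lemma exp_weight_absorbed_by_gaussian:
  fixes \<alpha> \<gamma> V \<sigma> a b :: real
  assumes "\<sigma> > 0" "\<alpha> \<ge> 0" "\<bar>a\<bar> \<le> \<bar>b\<bar> + V * \<sigma>" "\<alpha>\<^sup>2 + \<alpha> * V \<le> 3 * \<gamma> / 4"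
  shows "\<alpha> * \<bar>a\<bar> - \<gamma> * \<sigma> - b\<^sup>2 / (4 * \<sigma>) \<le> - (\<gamma> / 4) * \<sigma>"
proof -
  have "(\<alpha> * \<bar>b\<bar> - \<alpha>\<^sup>2 * \<sigma>) * (4 * \<sigma>) \<le> b\<^sup>2"
    using zero_le_power2[of "\<bar>b\<bar> - 2 * \<alpha> * \<sigma>"] by (simp add: power2_eq_square algebra_simps)
  then have square: "\<alpha> * \<bar>b\<bar> - \<alpha>\<^sup>2 * \<sigma> \<le> b\<^sup>2 / (4 * \<sigma>)"
    using assms(1) by (simp add: pos_le_divide_eq)
  have "\<alpha> * \<bar>a\<bar> \<le> \<alpha> * \<bar>b\<bar> + \<alpha> * V * \<sigma>"
    using mult_left_mono[OF assms(3,2)] by (simp add: algebra_simps)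
  moreover have "(\<alpha>\<^sup>2 + \<alpha> * V) * \<sigma> \<le> 3 * \<gamma> / 4 * \<sigma>"
    using assms(1,4) by (intro mult_right_mono) auto
  ultimately show ?thesis
    using square by (simp add: algebra_simps)
qed

lemma weighted_heat_kernel_le:
  fixes \<alpha> \<gamma> V t \<tau> x y \<xi> w :: real
  assumes "\<tau> < t" "\<alpha> \<ge> 0" "\<bar>x - y\<bar> \<le> \<bar>x - \<xi>\<bar> + V * (t - \<tau>)" "\<bar>w\<bar> \<le> V"
    and "\<alpha>\<^sup>2 + \<alpha> * V \<le> 3 * \<gamma> / 4"
  shows "exp (\<alpha> * \<bar>x - y\<bar>) * \<bar>exp (- \<gamma> * (t - \<tau>)) * heat_kernel x t \<xi> \<tau> * w\<bar>
    \<le> V * (exp (- (\<gamma> / 4) * (t - \<tau>)) / sqrt (4 * pi * (t - \<tau>)))"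
proof -
  have \<sigma>: "t - \<tau> > 0" using assms(1) by simp
  let ?E = "\<alpha> * \<bar>x - y\<bar> - \<gamma> * (t - \<tau>) - (x - \<xi>)\<^sup>2 / (4 * (t - \<tau>))"
  have "exp (\<alpha> * \<bar>x - y\<bar>) * \<bar>exp (- \<gamma> * (t - \<tau>)) * heat_kernel x t \<xi> \<tau> * w\<bar>
      = exp ?E / sqrt (4 * pi * (t - \<tau>)) * \<bar>w\<bar>"
    using \<sigma> by (simp add: heat_kernel_def abs_mult exp_diff exp_minus inverse_eq_divide)
  also have "\<dots> \<le> exp (- (\<gamma> / 4) * (t - \<tau>)) / sqrt (4 * pi * (t - \<tau>)) * V"
    using exp_weight_absorbed_by_gaussian[OF \<sigma> assms(2,3,5)] assms(4) \<sigma>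
    by (intro mult_mono divide_right_mono) auto
  finally show ?thesis by (simp add: mult.commute)
qed

lemma Lipschitz_bound_from_derivative_bound:
  fixes s v :: "real \<Rightarrow> real"
  assumes "a < b" "continuous_on {a..b} s"
    and "\<And>x. a < x \<Longrightarrow> x < b \<Longrightarrow> (s has_real_derivative v x) (at x)"
    and "\<And>x. a < x \<Longrightarrow> x < b \<Longrightarrow> \<bar>v x\<bar> \<le> V"
  shows "\<bar>s b - s a\<bar> \<le> V * (b - a)"
proof -
  obtain l z where z: "a < z" "z < b" "(s has_real_derivative l) (at z)" "s b - s a = (b - a) * l"
    using MVT[OF assms(1,2)] assms(3) real_differentiable_def by metis
  then have "l = v z" using assms(3) DERIV_unique by blast
  with z assms(1,4) show ?thesis by (simp add: abs_mult mult.commute mult_right_mono)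
qed

lemma admissible_rate_bound:
  fixes v0 V0 \<gamma> \<alpha> :: real
  assumes "0 < v0" "v0 \<le> V0" "0 \<le> \<alpha>" "\<alpha> < min (v0 / 4) (\<gamma> / (2 * V0))"
  shows "\<alpha>\<^sup>2 + \<alpha> * V0 \<le> 3 * \<gamma> / 4"
proof -
  have "\<alpha> * \<alpha> \<le> \<alpha> * (V0 / 4)"
    using assms by (intro mult_left_mono) auto
  moreover have "\<alpha> * V0 \<le> \<gamma> / 2"
    using assms by (simp add: less_divide_eq algebra_simps)
  moreover have "0 \<le> \<alpha> * V0"
    using assms by simp
  ultimately show ?thesis by (simp add: power2_eq_square)
qed

lemma weighted_T1_le:
  fixes \<gamma> \<alpha> V t x :: real and s v :: "real \<Rightarrow> real"
  assumes "\<gamma> > 0" "0 \<le> \<alpha>" "0 \<le> V" "\<alpha>\<^sup>2 + \<alpha> * V \<le> 3 * \<gamma> / 4"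
    and s_Lipschitz: "\<And>\<tau>. 0 < \<tau> \<Longrightarrow> \<tau> < t \<Longrightarrow> \<bar>s t - s \<tau>\<bar> \<le> V * (t - \<tau>)"
    and v_bound: "\<And>\<tau>. 0 < \<tau> \<Longrightarrow> \<tau> < t \<Longrightarrow> \<bar>v \<tau>\<bar> \<le> V"
  shows "exp (\<alpha> * \<bar>x - s t\<bar>) * \<bar>T1 \<gamma> s v t x\<bar> \<le> V / sqrt \<gamma>"
proof -
  \<comment> \<open>Integrate over the open interval: \<open>v 0\<close> is not controlled by the hypotheses.\<close>
  define k where "k = (\<lambda>\<tau>. exp (- (\<gamma> / 4) * (t - \<tau>)) / sqrt (4 * pi * (t - \<tau>)))"
  define f where "f = (\<lambda>\<tau>. exp (\<alpha> * \<bar>x - s t\<bar>) *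
    (exp (- \<gamma> * (t - \<tau>)) * heat_kernel x t (s \<tau>) \<tau> * v \<tau>))"
  have k_int: "k integrable_on {0<..<t}"
    and k_le: "integral {0<..<t} k \<le> 1 / (2 * sqrt (\<gamma> / 4))"
    using damped_heat_kernel_integral_le[of "\<gamma> / 4" t] assms(1)
    unfolding k_def integrable_on_Icc_iff_Ioo integral_open_interval_real by auto
  have f_le: "norm (f \<tau>) \<le> V * k \<tau>" if "\<tau> \<in> {0<..<t}" for \<tau>
  proof -
    have "\<bar>x - s t\<bar> \<le> \<bar>x - s \<tau>\<bar> + V * (t - \<tau>)"
      using s_Lipschitz[of \<tau>] that by auto
    then have "exp (\<alpha> * \<bar>x - s t\<bar>) *
        \<bar>exp (- \<gamma> * (t - \<tau>)) * heat_kernel x t (s \<tau>) \<tau> * v \<tau>\<bar> \<le> V * k \<tau>"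
      unfolding k_def using that v_bound[of \<tau>]
      by (intro weighted_heat_kernel_le[OF _ assms(2) _ _ assms(4)]) auto
    then show ?thesis by (simp add: f_def abs_mult)
  qed
  have "norm (integral {0<..<t} f) \<le> V * integral {0<..<t} k"
    \<comment> \<open>if \<open>f\<close> is not integrable, its integral is \<open>0\<close> by convention\<close>
  proof (cases "f integrable_on {0<..<t}")
    case True
    then show ?thesis
      using integral_norm_bound_integral[OF True integrable_on_mult_right[OF k_int] f_le] by simp
  next
    case False
    have "0 \<le> integral {0<..<t} k"
      by (rule integral_nonneg[OF k_int]) (auto simp: k_def)
    with False assms(3) show ?thesis by (simp add: not_integrable_integral)
  qed
  also have "\<dots> \<le> V / sqrt \<gamma>"
    using mult_left_mono[OF k_le assms(3)] by (simp add: real_sqrt_divide)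
  finally show ?thesis
    unfolding T1_def f_def integral_open_interval_real by (simp add: abs_mult)
qed

theorem mainTheorem4:
  fixes \<gamma> v0 V0 C \<alpha> :: real
    and g u0 s v :: "real \<Rightarrow> real" and u :: "real \<Rightarrow> real \<Rightarrow> real"
  assumes "\<gamma> > 0" and "0 < v0" and "v0 \<le> V0"
    and "admissible_kinetics v0 V0 C g"
    and "0 \<le> \<alpha>" and "\<alpha> < min (v0 / 4) (\<gamma> / (2 * V0))"
    and "u0 \<in> C_alpha \<alpha>"
    and "free_interface_solution \<gamma> g u0 s v u"
    and "\<forall>t>0. - V0 \<le> v t \<and> v t \<le> - v0"
  shows "\<forall>t>0. \<forall>x. exp (\<alpha> * \<bar>x - s t\<bar>) * \<bar>T1 \<gamma> s v t x\<bar> \<le> V0 / sqrt \<gamma>"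
proof -
  \<comment> \<open>The kinetics and the initial data enter only through the bounds on \<open>v\<close>.\<close>
  have V0: "0 \<le> V0" using assms(2,3) by linarith
  from assms(8) have s_cont: "continuous_on {0..} s"
    and s_deriv: "\<And>\<tau>. \<tau> > 0 \<Longrightarrow> (s has_real_derivative v \<tau>) (at \<tau>)"
    unfolding free_interface_solution_def by auto
  have v_bound: "\<bar>v \<tau>\<bar> \<le> V0" if "\<tau> > 0" for \<tau>
    using assms(2,9) that by fastforce
  have s_Lipschitz: "\<bar>s t - s \<tau>\<bar> \<le> V0 * (t - \<tau>)" if "0 < \<tau>" "\<tau> < t" for t \<tau>
    using that
    by (intro Lipschitz_bound_from_derivative_bound[where v = v])
      (auto intro: continuous_on_subset[OF s_cont] s_deriv v_bound)
  have "exp (\<alpha> * \<bar>x - s t\<bar>) * \<bar>T1 \<gamma> s v t x\<bar> \<le> V0 / sqrt \<gamma>" for t x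
    using admissible_rate_bound[OF assms(2,3,5,6)] s_Lipschitz v_bound
    by (intro weighted_T1_le[OF assms(1,5) V0]) auto
  then show ?thesis by blast
qed

end
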